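(* Let $L=\{0,1,\dots,m\}^n$ with componentwise order, and let $f_1,\dots,f_n:L\to L$ be inflationary. Consider one round $t$ of a non-interleaving execution with update-only-on-change starting from the committed state $G_t$, in which the functions $f_i$, $i\in S_t$, are executed. Then for every coordinate $j$: (1) every write to coordinate $j$ during round $t$ writes a value $\ge G_t[j]$; (2) $G_{t+1}[j]\ge G_t[j]$; (3) $G_{t+1}[j]=G_t[j]$ if and only if no write to coordinate $j$ occurs during round $t$.
   Context: Non-interleaving execution with update-only-on-change: execution proceeds in rounds $t=0,1,2,\dots$ with committed states $G_t\in L$. In round $t$ a set $S_t\subseteq\{1,\dots,n\}$ is chosen and each $f_i$, $i\in S_t$, is executed concurrently on shared memory: process $i$ reads a vector $X\in L$, where each coordinate $X[k]$ is read at some time during the round and returns either $G_t[k]$ or the value of some write to coordinate $k$ performed during the round (reads and writes overlapping arbitrarily; no memory consistency guarantee). Process $i$ computes $H=f_i(X)$ and, for each coordinate $k$, issues a write of $H[k]$ to coordinate $k$ if and only if $H[k]\neq X[k]$ (update-only-on-change). When several writes to the same coordinate occur, the final value is the value of one of them (last writer wins, in an arbitrary order). At the end of the round, $G_{t+1}[k]$ equals $G_t[k]$ if no write to coordinate $k$ occurred, and otherwise equals the value of one of the writes to coordinate $k$ during the round. A function $f$ is inflationary if $f(G)\ge G$ for all $G$. *)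

theory Defs
  imports Main
begin

text \<open>States: L = {0..m}^n, represented as functions nat => nat whose
  coordinates 0..n-1 lie in {0..m} and which are 0 outside {0..<n}.
  Processes and coordinates are indexed by 0..n-1.\<close>

definition lattice :: "nat \<Rightarrow> nat \<Rightarrow> (nat \<Rightarrow> nat) set" where
  "lattice m n = {x. (\<forall>k<n. x k \<le> m) \<and> (\<forall>k\<ge>n. x k = 0)}"

definition le_L :: "nat \<Rightarrow> (nat \<Rightarrow> nat) \<Rightarrow> (nat \<Rightarrow> nat) \<Rightarrow> bool" where
  "le_L n x y \<longleftrightarrow> (\<forall>k<n. x k \<le> y k)"

definition inflationary :: "nat \<Rightarrow> nat \<Rightarrow> ((nat \<Rightarrow> nat) \<Rightarrow> (nat \<Rightarrow> nat)) \<Rightarrow> bool" where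
  "inflationary m n g \<longleftrightarrow> (\<forall>G\<in>lattice m n. le_L n G (g G))"

text \<open>Values of the writes to coordinate k during the round: process i in S,
  having read the vector X i, writes H[k] with H = f i (X i) iff H[k] differs
  from X i k (update-only-on-change).\<close>
definition writes ::
  "(nat \<Rightarrow> (nat \<Rightarrow> nat) \<Rightarrow> (nat \<Rightarrow> nat)) \<Rightarrow> nat set \<Rightarrow> (nat \<Rightarrow> nat \<Rightarrow> nat) \<Rightarrow> nat \<Rightarrow> nat set" where
  "writes f S X k = {f i (X i) k | i. i \<in> S \<and> f i (X i) k \<noteq> X i k}"

text \<open>Each coordinate read returns
  G k or the value of some write to coordinate k in the round (no memory
  consistency guarantee, so no ordering constraint is imposed); the committed
  value is G k if there is no write to k and otherwise the value of one of
  the writes to k.\<close>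
definition round_exec ::
  "nat \<Rightarrow> nat \<Rightarrow> (nat \<Rightarrow> (nat \<Rightarrow> nat) \<Rightarrow> (nat \<Rightarrow> nat)) \<Rightarrow> (nat \<Rightarrow> nat) \<Rightarrow> nat set
    \<Rightarrow> (nat \<Rightarrow> nat \<Rightarrow> nat) \<Rightarrow> (nat \<Rightarrow> nat) \<Rightarrow> bool" where
  "round_exec m n f G S X G' \<longleftrightarrow>
     G \<in> lattice m n \<and> S \<subseteq> {..<n} \<and>
     (\<forall>i\<in>S. X i \<in> lattice m n \<and>
        (\<forall>k. X i k = G k \<or> X i k \<in> writes f S X k)) \<and>
     (\<forall>k. (writes f S X k = {} \<longrightarrow> G' k = G k) \<and>
          (writes f S X k \<noteq> {} \<longrightarrow> G' k \<in> writes f S X k))"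

end

theory Submission
  imports Defs
begin

text \<open>Every write to coordinate j is strictly larger than the value its writer read at j,
  by inflationarity and update-only-on-change. That value is either G j or another write,
  so descending along writes (a well-founded descent) ends at G j, and every write is
  strictly larger than G j. Strictness gives the characterization of unchanged coordinates.\<close>

lemma less_all_by_descent:
  fixes g :: "'a::wellorder"
  assumes descent: "\<And>w. w \<in> W \<Longrightarrow> \<exists>r<w. r = g \<or> r \<in> W"
    and "w \<in> W"
  shows "g < w"
  using \<open>w \<in> W\<close>
proof (induction w rule: less_induct)
  case (less w)
  then obtain r where "r < w" and "r = g \<or> r \<in> W"
    using descent by blast
  then show ?case
    using less.IH by (meson order.strict_trans)
qed

lemma inflationary_changed_coord_gt:
  assumes "inflationary m n g" and "x \<in> lattice m n" and "k < n" and "g x k \<noteq> x k"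
  shows "x k < g x k"
  using assms unfolding inflationary_def le_L_def by (metis le_neq_implies_less)

lemma round_exec_writes_gt:
  assumes infl: "\<forall>i<n. inflationary m n (f i)"
    and round: "round_exec m n f G S X G'"
    and "j < n" and "v \<in> writes f S X j"
  shows "G j < v"
proof (rule less_all_by_descent[OF _ \<open>v \<in> writes f S X j\<close>])
  fix w assume "w \<in> writes f S X j"
  then obtain i where i: "i \<in> S" "w = f i (X i) j" "f i (X i) j \<noteq> X i j"
    unfolding writes_def by blast
  with round have "i < n" and "X i \<in> lattice m n"
    and "X i j = G j \<or> X i j \<in> writes f S X j"
    unfolding round_exec_def by auto
  moreover have "X i j < w"
    using i infl inflationary_changed_coord_gt[OF _ \<open>X i \<in> lattice m n\<close> \<open>j < n\<close>]
      \<open>i < n\<close> by simp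
  ultimately show "\<exists>r<w. r = G j \<or> r \<in> writes f S X j"
    by blast
qed

theorem lemma1:
  fixes m n :: nat
    and f :: "nat \<Rightarrow> (nat \<Rightarrow> nat) \<Rightarrow> (nat \<Rightarrow> nat)"
    and G G' :: "nat \<Rightarrow> nat" and S :: "nat set" and X :: "nat \<Rightarrow> nat \<Rightarrow> nat"
  assumes maps: "\<forall>i<n. \<forall>x\<in>lattice m n. f i x \<in> lattice m n"
    and infl: "\<forall>i<n. inflationary m n (f i)"
    and round: "round_exec m n f G S X G'"
  shows "\<forall>j<n. (\<forall>v\<in>writes f S X j. G j \<le> v) \<and> G j \<le> G' j
               \<and> (G' j = G j \<longleftrightarrow> writes f S X j = {})"
proof (intro allI impI)
  fix j assume "j < n"
  let ?W = "writes f S X j"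
  have gt: "\<forall>v\<in>?W. G j < v"
    using round_exec_writes_gt[OF infl round \<open>j < n\<close>] by blast
  have "(?W = {} \<longrightarrow> G' j = G j) \<and> (?W \<noteq> {} \<longrightarrow> G' j \<in> ?W)"
    using round unfolding round_exec_def by blast
  with gt show "(\<forall>v\<in>?W. G j \<le> v) \<and> G j \<le> G' j \<and> (G' j = G j \<longleftrightarrow> ?W = {})"
    by (metis less_imp_le order.irrefl order.refl)
qed

end
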